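(* Consider the distributed quantized weight-balancing algorithm described in the context on a strongly connected digraph, with step-size $\gamma(k)=2^{-n}$ for $2^n-1\le k\le 2^{n+1}-2$. Let $\mathcal{V}^+(k)=\{i\in\mathcal{V}:b_i(k)\ge0\}$ and $\mathcal{V}^{--}(k)=\{i\in\mathcal{V}:b_i(k)<0\}$. If the decreasing event $\mathcal{D}_k$ does not occur, then $\mathcal{V}^+(k+1)=\mathcal{V}^+(k)$ and $\mathcal{V}^{--}(k+1)=\mathcal{V}^{--}(k)$.
   Context: $\mathcal{G}=(\mathcal{V},\mathcal{E})$, $\mathcal{V}=\{1,\dots,N\}$, no self-loops; $\mathcal{N}_i^-=\{j:(j,i)\in\mathcal{E}\}$, $\mathcal{N}_i^+=\{j:(i,j)\in\mathcal{E}\}$, $d_i^+=|\mathcal{N}_i^+|$. Algorithm: $a_{ij}(0)=1$ if $j\in\mathcal{N}_i^-$ and $0$ otherwise; $b_i(k)=\sum_{j\in\mathcal{N}_i^-}a_{ij}(k)-\sum_{j\in\mathcal{N}_i^+}a_{ji}(k)$; $n_i(k)=1$ if $b_i(k)\ge d_i^+\gamma(k)$, else $0$; $a_{ij}(k+1)=a_{ij}(k)+n_j(k)\gamma(k)$ for $j\in\mathcal{N}_i^-$. The decreasing event $\mathcal{D}_k$: there exist $i\in\mathcal{V}$ and $j\in\mathcal{N}_i^+$ with $n_i(k)>0$ and $b_j(k)<0$. *)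

theory Defs
  imports Complex_Main
begin

definition in_nbrs :: "(nat \<times> nat) set \<Rightarrow> nat \<Rightarrow> nat set" where
  "in_nbrs E i = {j. (j, i) \<in> E}"

definition out_nbrs :: "(nat \<times> nat) set \<Rightarrow> nat \<Rightarrow> nat set" where
  "out_nbrs E i = {j. (i, j) \<in> E}"

definition out_deg :: "(nat \<times> nat) set \<Rightarrow> nat \<Rightarrow> nat" where
  "out_deg E i = card (out_nbrs E i)"

text \<open>Weights are stored as a i j = a_{ij}, the weight of edge (j,i).\<close>

definition imbalance :: "(nat \<times> nat) set \<Rightarrow> (nat \<Rightarrow> nat \<Rightarrow> real) \<Rightarrow> nat \<Rightarrow> real" where
  "imbalance E a i = (\<Sum>j\<in>in_nbrs E i. a i j) - (\<Sum>j\<in>out_nbrs E i. a j i)"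

definition nflag :: "(nat \<times> nat) set \<Rightarrow> real \<Rightarrow> (nat \<Rightarrow> nat \<Rightarrow> real) \<Rightarrow> nat \<Rightarrow> real" where
  "nflag E g a i = (if imbalance E a i \<ge> real (out_deg E i) * g then 1 else 0)"

primrec wts :: "(nat \<times> nat) set \<Rightarrow> (nat \<Rightarrow> real) \<Rightarrow> nat \<Rightarrow> nat \<Rightarrow> nat \<Rightarrow> real" where
  "wts E gamma 0 = (\<lambda>i j. if (j, i) \<in> E then 1 else 0)"
| "wts E gamma (Suc k) = (\<lambda>i j. if (j, i) \<in> E
      then wts E gamma k i j + nflag E (gamma k) (wts E gamma k) j * gamma k else 0)"

definition b_at :: "(nat \<times> nat) set \<Rightarrow> (nat \<Rightarrow> real) \<Rightarrow> nat \<Rightarrow> nat \<Rightarrow> real" where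
  "b_at E gamma k i = imbalance E (wts E gamma k) i"

definition n_at :: "(nat \<times> nat) set \<Rightarrow> (nat \<Rightarrow> real) \<Rightarrow> nat \<Rightarrow> nat \<Rightarrow> real" where
  "n_at E gamma k i = nflag E (gamma k) (wts E gamma k) i"

definition decreasing_event :: "nat \<Rightarrow> (nat \<times> nat) set \<Rightarrow> (nat \<Rightarrow> real) \<Rightarrow> nat \<Rightarrow> bool" where
  "decreasing_event N E gamma k \<longleftrightarrow>
     (\<exists>i\<in>{1..N}. \<exists>j\<in>out_nbrs E i. n_at E gamma k i > 0 \<and> b_at E gamma k j < 0)"

end

theory Submission
  imports Defs
begin

text \<open>
  One step of the algorithm changes b_i by (sum of n_j \<gamma> over in-neighbours j) - d_i^+ n_i \<gamma>.
  A node with b_i \<ge> 0 can only lose d_i^+ \<gamma>, and only when n_i = 1, that is when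
  b_i \<ge> d_i^+ \<gamma>; so it stays nonnegative. A node with b_i < 0 never fires, and if
  the decreasing event does not occur, none of its in-neighbours fires either, so b_i is unchanged.
\<close>

lemma dyadic_block_exists:
  fixes k :: nat
  shows "\<exists>n. 2 ^ n - 1 \<le> k \<and> k \<le> 2 ^ (n + 1) - 2"
proof -
  obtain n :: nat where "2 ^ n \<le> k + 1" "k + 1 < 2 ^ (n + 1)"
    using ex_power_ivl1[of 2 "k + 1"] by auto
  then show ?thesis by (intro exI[of _ n]) linarith
qed

lemma dyadic_step_pos:
  fixes gamma :: "nat \<Rightarrow> real"
  assumes "\<And>n k. 2 ^ n - 1 \<le> k \<Longrightarrow> k \<le> 2 ^ (n + 1) - 2 \<Longrightarrow> gamma k = 1 / 2 ^ n"
  shows "gamma k > 0"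
  using dyadic_block_exists[of k] assms by auto

lemma nflag_cases: "nflag E g a i = 0 \<or> nflag E g a i = 1"
  by (simp add: nflag_def)

lemma imbalance_ge_if_nflag_eq_1: "nflag E g a i = 1 \<Longrightarrow> imbalance E a i \<ge> real (out_deg E i) * g"
  by (simp add: nflag_def split: if_splits)

lemma nflag_eq_0_if_imbalance_neg:
  assumes "g \<ge> 0" "imbalance E a i < 0"
  shows "nflag E g a i = 0"
proof -
  have "real (out_deg E i) * g \<ge> 0" using assms(1) by simp
  then show ?thesis using assms(2) by (simp add: nflag_def)
qed

text \<open>No finiteness of the neighbourhoods is needed: over an infinite set both sum and card are 0.\<close>

lemma b_at_Suc:
  "b_at E gamma (Suc k) i = b_at E gamma k i
     + (\<Sum>j\<in>in_nbrs E i. n_at E gamma k j * gamma k)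
     - real (out_deg E i) * (n_at E gamma k i * gamma k)"
proof -
  have in_sum: "(\<Sum>j\<in>in_nbrs E i. wts E gamma (Suc k) i j)
      = (\<Sum>j\<in>in_nbrs E i. wts E gamma k i j + n_at E gamma k j * gamma k)"
    by (rule sum.cong) (auto simp: in_nbrs_def n_at_def)
  have out_sum: "(\<Sum>j\<in>out_nbrs E i. wts E gamma (Suc k) j i)
      = (\<Sum>j\<in>out_nbrs E i. wts E gamma k j i + n_at E gamma k i * gamma k)"
    by (rule sum.cong) (auto simp: out_nbrs_def n_at_def)
  show ?thesis
    unfolding b_at_def imbalance_def in_sum out_sum sum.distrib out_deg_def by simp
qed

lemma b_at_Suc_nonneg:
  assumes "gamma k \<ge> 0" "b_at E gamma k i \<ge> 0"
  shows "b_at E gamma (Suc k) i \<ge> 0"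
proof -
  have inflow: "(\<Sum>j\<in>in_nbrs E i. n_at E gamma k j * gamma k) \<ge> 0"
    using assms(1) by (intro sum_nonneg) (simp add: n_at_def nflag_def)
  have outflow: "real (out_deg E i) * (n_at E gamma k i * gamma k) \<le> b_at E gamma k i"
    using nflag_cases[of E "gamma k" "wts E gamma k" i] imbalance_ge_if_nflag_eq_1 assms(2)
    by (auto simp: n_at_def b_at_def)
  show ?thesis using b_at_Suc[of E gamma k i] inflow outflow by linarith
qed

lemma b_at_Suc_eq_if_neg:
  assumes "gamma k \<ge> 0" "b_at E gamma k i < 0"
    and silent: "\<And>j. j \<in> in_nbrs E i \<Longrightarrow> n_at E gamma k j = 0"
  shows "b_at E gamma (Suc k) i = b_at E gamma k i"
proof -
  have "n_at E gamma k i = 0"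
    using nflag_eq_0_if_imbalance_neg assms(1,2) by (simp add: n_at_def b_at_def)
  then show ?thesis using b_at_Suc[of E gamma k i] silent by simp
qed

lemma in_nbrs_silent_if_no_event:
  assumes edges: "E \<subseteq> {1..N} \<times> {1..N}"
    and no_event: "\<not> decreasing_event N E gamma k"
    and neg: "b_at E gamma k i < 0" and j: "j \<in> in_nbrs E i"
  shows "n_at E gamma k j = 0"
proof -
  have "j \<in> {1..N}" "i \<in> out_nbrs E j"
    using j edges by (auto simp: in_nbrs_def out_nbrs_def)
  then have "\<not> n_at E gamma k j > 0"
    using no_event neg unfolding decreasing_event_def by blast
  then show ?thesis
    using nflag_cases[of E "gamma k" "wts E gamma k" j] by (auto simp: n_at_def)
qed

theorem lemma2:
  fixes N :: nat and E :: "(nat \<times> nat) set" and gamma :: "nat \<Rightarrow> real" and k :: nat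
  assumes edges: "E \<subseteq> {1..N} \<times> {1..N}"
    and no_loops: "\<forall>i. (i, i) \<notin> E"
    and strongly_connected: "\<forall>i\<in>{1..N}. \<forall>j\<in>{1..N}. (i, j) \<in> E\<^sup>*"
    and step: "\<And>n k. 2 ^ n - 1 \<le> k \<Longrightarrow> k \<le> 2 ^ (n + 1) - 2 \<Longrightarrow> gamma k = 1 / 2 ^ n"
    and no_event: "\<not> decreasing_event N E gamma k"
  shows "{i\<in>{1..N}. b_at E gamma (Suc k) i \<ge> 0} = {i\<in>{1..N}. b_at E gamma k i \<ge> 0}
       \<and> {i\<in>{1..N}. b_at E gamma (Suc k) i < 0} = {i\<in>{1..N}. b_at E gamma k i < 0}"
proof -
  have "gamma k > 0" by (rule dyadic_step_pos) (rule step)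
  then have gamma_nonneg: "gamma k \<ge> 0" by simp
  have sign_kept: "b_at E gamma (Suc k) i \<ge> 0 \<longleftrightarrow> b_at E gamma k i \<ge> 0" for i
  proof (cases "b_at E gamma k i \<ge> 0")
    case True
    then show ?thesis using b_at_Suc_nonneg[of gamma k E i] gamma_nonneg by simp
  next
    case False
    then have "b_at E gamma k i < 0" by simp
    with in_nbrs_silent_if_no_event[OF edges no_event]
    have "b_at E gamma (Suc k) i = b_at E gamma k i"
      by (intro b_at_Suc_eq_if_neg[of gamma k] gamma_nonneg) auto
    then show ?thesis by simp
  qed
  then show ?thesis by (auto simp: not_le[symmetric])
qed

end
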